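(* Let $n\ge1$ and let $\mathcal{P}$ be a finite index set of pairs $(i,j)$. For each $(i,j)\in\mathcal{P}$ let $H^{[ij]}\in\mathbb{R}^{n\times n}$ be symmetric positive semidefinite, let $c^{[ij]}\in\mathbb{R}^n$ lie in the column space of $H^{[ij]}$, let $h^{[ij]}\in\mathbb{R}$, and let $w_{ij}\ge 0$. Define $$\mathfrak{B}^{[ij]}(\mathbf{u})=\exp\!\big(-\mathbf{u}^\top H^{[ij]}\mathbf{u}-(c^{[ij]})^\top\mathbf{u}-h^{[ij]}\big),\qquad F(\mathbf{u})=\sum_{(i,j)\in\mathcal{P}} w_{ij}\,\mathfrak{B}^{[ij]}(\mathbf{u}),$$ and $$D_{ij}=\left\{\mathbf{u}:\ \mathbf{u}^\top H^{[ij]}\mathbf{u}+(c^{[ij]})^\top\mathbf{u}+\tfrac14 (c^{[ij]})^\top (H^{[ij]})^{+}c^{[ij]}\le\tfrac12\right\},$$ where $(H^{[ij]})^{+}$ is the Moore–Penrose pseudoinverse. Let $\mathcal{U}\subset\mathbb{R}^n$ be a bounded polytope (the convex hull of finitely many vertices). If every vertex of $\mathcal{U}$ belongs to $D_{ij}$ for every $(i,j)\in\mathcal{P}$, then $F$ is concave on $\mathcal{U}$.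
   Context: In the application, the weights are $w_{ij}=\sqrt{P_k(M^{[i]})P_k(M^{[j]})}$ (products of current model probabilities), $F$ is the upper bound on the predicted misdiagnosis probability as a function of the stacked future input $\mathbf{u}$, and $\mathcal{U}$ is a polytopic input constraint set. *)

theory Defs
  imports "HOL-Analysis.Analysis"
begin

definition is_pinv :: "real^'n^'n \<Rightarrow> real^'n^'n \<Rightarrow> bool" where
  "is_pinv A X \<longleftrightarrow> A ** X ** A = A \<and> X ** A ** X = X
     \<and> transpose (A ** X) = A ** X \<and> transpose (X ** A) = X ** A"

definition pinv :: "real^'n^'n \<Rightarrow> real^'n^'n" where
  "pinv A = (THE X. is_pinv A X)"

definition psd :: "real^'n^'n \<Rightarrow> bool" where
  "psd A \<longleftrightarrow> (\<forall>x. 0 \<le> x \<bullet> (A *v x))"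

definition Bfun :: "real^'n^'n \<Rightarrow> real^'n \<Rightarrow> real \<Rightarrow> real^'n \<Rightarrow> real" where
  "Bfun H c h u = exp (- (u \<bullet> (H *v u)) - c \<bullet> u - h)"

definition Ffun :: "'p set \<Rightarrow> ('p \<Rightarrow> real) \<Rightarrow> ('p \<Rightarrow> real^'n^'n) \<Rightarrow> ('p \<Rightarrow> real^'n)
    \<Rightarrow> ('p \<Rightarrow> real) \<Rightarrow> real^'n \<Rightarrow> real" where
  "Ffun P w H c h u = (\<Sum>p\<in>P. w p * Bfun (H p) (c p) (h p) u)"

definition Dset :: "real^'n^'n \<Rightarrow> real^'n \<Rightarrow> (real^'n) set" where
  "Dset H c = {u. u \<bullet> (H *v u) + c \<bullet> u + (1/4) * (c \<bullet> (pinv H *v c)) \<le> 1/2}"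

end

theory Submission
  imports Defs
begin

text \<open>Write \<open>c = H z\<close>. Along the line \<open>x + s d\<close> the function \<open>B\<close> is \<open>exp (-(a s\<^sup>2 + b s + e))\<close>
  with \<open>a = d\<^sup>T H d\<close>, whose second derivative \<open>((2 a s + b)\<^sup>2 - 2 a) B\<close> is nonpositive as long as
  \<open>(2 a s + b)\<^sup>2 \<le> 2 a\<close>. Since \<open>2 a s + b = (2 u + z)\<^sup>T H d\<close> at the point \<open>u\<close>, the Cauchy--Schwarz
  inequality for the semi-inner product of \<open>H\<close> reduces this to \<open>(2 u + z)\<^sup>T H (2 u + z) \<le> 2\<close>, which is
  exactly membership of \<open>u\<close> in \<open>D\<close> because \<open>c\<^sup>T H\<^sup>+ c = z\<^sup>T H z\<close>. The set \<open>D\<close> is a sublevel set of a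
  convex quadratic, so it contains the polytope as soon as it contains its vertices, and a
  nonnegative combination of concave functions is concave.\<close>

lemma symmetric_matrix_inner:
  fixes H :: "real^'n^'n"
  assumes "transpose H = H"
  shows "x \<bullet> (H *v y) = (H *v x) \<bullet> y"
  by (metis assms dot_lmul_matrix transpose_matrix_vector)

lemma symmetric_matrixI:
  fixes A :: "real^'n^'n"
  assumes "\<And>x y. (A *v x) \<bullet> y = x \<bullet> (A *v y)"
  shows "transpose A = A"
proof -
  have "(transpose A *v x - A *v x) \<bullet> y = 0" for x y
    by (simp add: inner_diff_left dot_lmul_matrix assms)
  then show ?thesis
    by (metis matrix_eq eq_iff_diff_eq_0 inner_eq_zero_iff)
qed

lemma orthogonal_projection_matrix_exists:
  fixes V :: "(real^'n) set"
  assumes "subspace V"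
  obtains P :: "real^'n^'n"
  where "\<And>x. P *v x \<in> V" and "\<And>x v. v \<in> V \<Longrightarrow> (x - P *v x) \<bullet> v = 0"
    and "\<And>v. v \<in> V \<Longrightarrow> P *v v = v"
proof -
  obtain B where BV: "B \<subseteq> V" and orthB: "pairwise orthogonal B" and spanB: "span B = V"
    using orthogonal_basis_subspace[OF assms] by metis
  define p where "p x = (\<Sum>b\<in>B. (b \<bullet> x / (b \<bullet> b)) *\<^sub>R b)" for x :: "real^'n"
  have "linear p"
    by (rule linearI) (simp_all add: p_def inner_add_right add_divide_distrib scaleR_add_left
        sum.distrib scaleR_sum_right)
  then have Pv: "matrix p *v x = p x" for x
    by (simp add: matrix_works)
  have range: "p x \<in> V" for x
    unfolding p_def using BV spanB span_sum span_mul span_base by (metis (no_types, lifting) subsetD)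
  have orth: "(x - p x) \<bullet> v = 0" if "v \<in> V" for x v
    using Gram_Schmidt_step[OF orthB, of v x] that spanB
    by (simp add: p_def orthogonal_def inner_commute)
  have "p v = v" if "v \<in> V" for v
  proof -
    have "v - p v \<in> V" using that range assms by (simp add: subspace_diff)
    then show ?thesis using orth[of "v - p v" v] by simp
  qed
  then show ?thesis using that[of "matrix p"] Pv range orth by simp
qed

text \<open>With \<open>P\<close> the orthogonal projection onto the range of \<open>H\<close>, the matrix \<open>H + (I - P)\<close> agrees with \<open>H\<close>
  on that range and with the identity on its orthogonal complement, the kernel of \<open>H\<close>; inverting it
  and removing the kernel part gives the pseudoinverse.\<close>

lemma is_pinv_via_projection:
  fixes H P N :: "real^'n^'n"
  assumes P_sym: "transpose P = P" and P_idem: "\<And>x. P *v (P *v x) = P *v x"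
    and HP: "\<And>x. H *v (P *v x) = H *v x" and PH: "\<And>x. P *v (H *v x) = H *v x"
    and N_left: "N ** (H + (mat 1 - P)) = mat 1" and N_right: "(H + (mat 1 - P)) ** N = mat 1"
  shows "is_pinv H (N - (mat 1 - P))"
proof -
  define X where "X = N - (mat 1 - P)"
  have M: "(H + (mat 1 - P)) *v x = H *v x + (x - P *v x)" for x
    by (simp add: matrix_vector_mult_add_rdistrib matrix_vector_mult_diff_rdistrib)
  have y_eq: "y = H *v (N *v y) + (N *v y - P *v (N *v y))" for y
    using M[of "N *v y"] N_right by (simp add: matrix_vector_mul_assoc)
  have Py: "P *v y = H *v (N *v y)" for y
    using arg_cong[OF y_eq[of y], of "(*v) P"]
    by (simp add: matrix_vector_right_distrib matrix_vector_mult_diff_distrib PH P_idem)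
  have X_eq: "X *v y = P *v (N *v y)" for y
  proof -
    have "X *v y = N *v y - (y - P *v y)"
      by (simp add: X_def matrix_vector_mult_diff_rdistrib)
    moreover have "y - P *v y = N *v y - P *v (N *v y)"
      using y_eq[of y] Py[of y] by (metis add_diff_cancel_left')
    ultimately show ?thesis by simp
  qed
  have HX: "H *v (X *v y) = P *v y" for y
    by (simp add: X_eq HP flip: Py)
  have XH: "X *v (H *v y) = P *v y" for y
  proof -
    have "(H + (mat 1 - P)) *v (P *v y) = H *v y"
      by (simp add: M HP P_idem)
    then have "N *v (H *v y) = P *v y"
      using N_left by (metis matrix_vector_mul_assoc matrix_vector_mul_lid)
    then show ?thesis by (simp add: X_eq P_idem)
  qed
  have P_self_adjoint: "(P *v x) \<bullet> y = x \<bullet> (P *v y)" for x y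
    using symmetric_matrix_inner[OF P_sym] by simp
  have "is_pinv H X"
    unfolding is_pinv_def
  proof (intro conjI)
    show "H ** X ** H = H"
      by (simp add: matrix_eq HX XH HP flip: matrix_vector_mul_assoc)
    show "X ** H ** X = X"
      by (simp add: matrix_eq XH flip: matrix_vector_mul_assoc) (simp add: X_eq P_idem)
    show "transpose (H ** X) = H ** X"
      by (rule symmetric_matrixI) (simp add: HX P_self_adjoint flip: matrix_vector_mul_assoc)
    show "transpose (X ** H) = X ** H"
      by (rule symmetric_matrixI) (simp add: XH P_self_adjoint flip: matrix_vector_mul_assoc)
  qed
  then show ?thesis unfolding X_def .
qed

lemma symmetric_matrix_has_pinv:
  fixes H :: "real^'n^'n"
  assumes H_sym: "transpose H = H"
  shows "\<exists>X. is_pinv H X"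
proof -
  define V where "V = range (\<lambda>x. H *v x)"
  have "subspace V"
    unfolding V_def by (metis subspace_UNIV matrix_vector_mul_linear linear_subspace_image)
  obtain P :: "real^'n^'n" where P_range: "\<And>x. P *v x \<in> V"
    and P_orth: "\<And>x v. v \<in> V \<Longrightarrow> (x - P *v x) \<bullet> v = 0"
    and P_fix: "\<And>v. v \<in> V \<Longrightarrow> P *v v = v"
    using orthogonal_projection_matrix_exists[OF \<open>subspace V\<close>] by blast
  have H_self_adjoint: "x \<bullet> (H *v y) = (H *v x) \<bullet> y" for x y
    using symmetric_matrix_inner[OF H_sym] .
  have H_in_V: "H *v x \<in> V" for x
    by (simp add: V_def)
  have kernel: "H *v w = 0" if "\<And>v. v \<in> V \<Longrightarrow> w \<bullet> v = 0" for w
  proof -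
    have "(H *v w) \<bullet> (H *v w) = w \<bullet> (H *v (H *v w))"
      by (rule H_self_adjoint[symmetric])
    also have "\<dots> = 0"
      using that H_in_V by blast
    finally show ?thesis by simp
  qed
  have P_idem: "P *v (P *v x) = P *v x" for x
    using P_fix P_range by blast
  have HP: "H *v (P *v x) = H *v x" for x
    using kernel[OF P_orth, of x] by (simp add: matrix_vector_mult_diff_distrib)
  have PH: "P *v (H *v x) = H *v x" for x
    using P_fix H_in_V by blast
  have P_sym: "transpose P = P"
  proof (rule symmetric_matrixI)
    fix x y
    have "(P *v x) \<bullet> y = (P *v x) \<bullet> (P *v y)"
      using P_orth[OF P_range, of y x] by (simp add: inner_diff_left inner_diff_right inner_commute)
    also have "\<dots> = x \<bullet> (P *v y)"
      using P_orth[OF P_range, of x y] by (simp add: inner_diff_left)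
    finally show "(P *v x) \<bullet> y = x \<bullet> (P *v y)" .
  qed
  have "x = 0" if "(H + (mat 1 - P)) *v x = 0" for x
  proof -
    have sum0: "H *v x + (x - P *v x) = 0"
      using that by (simp add: matrix_vector_mult_add_rdistrib matrix_vector_mult_diff_rdistrib)
    have "(H *v x) \<bullet> (H *v x) = (H *v x + (x - P *v x)) \<bullet> (H *v x) - (x - P *v x) \<bullet> (H *v x)"
      by (simp add: inner_add_left)
    also have "\<dots> = 0"
      using sum0 P_orth[OF H_in_V] by simp
    finally have "H *v x = 0" by simp
    with sum0 have "x = P *v x" by simp
    then have "x \<in> V"
      using P_range by metis
    then obtain u where "x = H *v u" by (auto simp: V_def)
    then have "x \<bullet> x = u \<bullet> (H *v x)" using H_self_adjoint by simp
    with \<open>H *v x = 0\<close> show ?thesis by simp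
  qed
  then obtain N where N_left: "N ** (H + (mat 1 - P)) = mat 1"
    using matrix_left_invertible_ker by blast
  then have "(H + (mat 1 - P)) ** N = mat 1"
    using matrix_left_right_inverse by blast
  with N_left show ?thesis
    using is_pinv_via_projection[OF P_sym P_idem HP PH] by blast
qed

lemma is_pinv_unique:
  fixes A X Y :: "real^'n^'n"
  assumes X: "is_pinv A X" and Y: "is_pinv A Y"
  shows "X = Y"
proof -
  have x1: "A ** X ** A = A" and x2: "X ** A ** X = X" and x3: "transpose (A ** X) = A ** X"
    and x4: "transpose (X ** A) = X ** A" using X by (auto simp: is_pinv_def)
  have y1: "A ** Y ** A = A" and y2: "Y ** A ** Y = Y" and y3: "transpose (A ** Y) = A ** Y"
    and y4: "transpose (Y ** A) = Y ** A" using Y by (auto simp: is_pinv_def)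
  have tA: "transpose A = transpose A ** transpose Y ** transpose A"
    by (metis y1 matrix_transpose_mul matrix_mul_assoc)
  have "X = X ** (A ** X)" using x2 by (simp add: matrix_mul_assoc)
  also have "\<dots> = X ** (transpose X ** transpose A)" by (metis x3 matrix_transpose_mul)
  also have "\<dots> = X ** (transpose X ** (transpose A ** transpose Y ** transpose A))" using tA by simp
  also have "\<dots> = X ** (transpose (A ** X) ** transpose (A ** Y))"
    by (simp add: matrix_transpose_mul matrix_mul_assoc)
  also have "\<dots> = (X ** A ** X) ** A ** Y" by (simp add: x3 y3 matrix_mul_assoc)
  finally have X_eq: "X = X ** A ** Y" using x2 by simp
  have "Y = (Y ** A) ** Y" using y2 by simp
  also have "\<dots> = (transpose A ** transpose Y) ** Y" by (metis y4 matrix_transpose_mul)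
  also have "\<dots> = ((transpose A ** transpose X ** transpose A) ** transpose Y) ** Y"
    by (metis x1 matrix_transpose_mul matrix_mul_assoc)
  also have "\<dots> = (transpose (X ** A) ** transpose (Y ** A)) ** Y"
    by (simp add: matrix_transpose_mul matrix_mul_assoc)
  also have "\<dots> = X ** A ** (Y ** A ** Y)" by (simp add: x4 y4 matrix_mul_assoc)
  finally have "Y = X ** A ** Y" using y2 by simp
  with X_eq show ?thesis by simp
qed

lemma is_pinv_pinv_symmetric:
  fixes H :: "real^'n^'n"
  assumes "transpose H = H"
  shows "is_pinv H (pinv H)"
  unfolding pinv_def
  using symmetric_matrix_has_pinv[OF assms] is_pinv_unique by (metis theI)

lemma inner_pinv_range:
  fixes H :: "real^'n^'n"
  assumes H_sym: "transpose H = H" and c: "c = H *v z"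
  shows "c \<bullet> (pinv H *v c) = z \<bullet> (H *v z)"
proof -
  have HXH: "H ** pinv H ** H = H"
    using is_pinv_pinv_symmetric[OF H_sym] by (simp add: is_pinv_def)
  have "c \<bullet> (pinv H *v c) = z \<bullet> (H *v (pinv H *v (H *v z)))"
    unfolding c by (simp add: symmetric_matrix_inner[OF H_sym])
  also have "\<dots> = z \<bullet> ((H ** pinv H ** H) *v z)"
    by (simp only: matrix_vector_mul_assoc matrix_mul_assoc)
  finally show ?thesis unfolding HXH .
qed

lemma quadratic_form_add:
  fixes H :: "real^'n^'n"
  assumes "transpose H = H"
  shows "(x + y) \<bullet> (H *v (x + y)) = x \<bullet> (H *v x) + 2 * (x \<bullet> (H *v y)) + y \<bullet> (H *v y)"
  using symmetric_matrix_inner[OF assms, of y x]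
  by (simp add: matrix_vector_right_distrib inner_add_left inner_add_right inner_commute)

lemma quadratic_form_scaleR:
  fixes H :: "real^'n^'n"
  shows "(s *\<^sub>R x) \<bullet> (H *v (t *\<^sub>R y)) = s * t * (x \<bullet> (H *v y))"
  by (simp add: matrix_vector_mult_scaleR)

lemma psd_cauchy_schwarz:
  fixes H :: "real^'n^'n"
  assumes H_sym: "transpose H = H" and H_psd: "psd H"
  shows "(x \<bullet> (H *v y))\<^sup>2 \<le> (x \<bullet> (H *v x)) * (y \<bullet> (H *v y))"
proof -
  define A B C where "A = x \<bullet> (H *v x)" and "B = x \<bullet> (H *v y)" and "C = y \<bullet> (H *v y)"
  have nonneg: "0 \<le> A + 2 * t * B + t\<^sup>2 * C" for t
  proof -
    have "0 \<le> (x + t *\<^sub>R y) \<bullet> (H *v (x + t *\<^sub>R y))"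
      using H_psd by (simp add: psd_def)
    also have "\<dots> = A + 2 * t * B + t\<^sup>2 * C"
      unfolding quadratic_form_add[OF H_sym] A_def B_def C_def
      using quadratic_form_scaleR[of 1 x H t y] quadratic_form_scaleR[of t y H t y]
      by (simp add: power2_eq_square)
    finally show ?thesis .
  qed
  have "0 \<le> C" using H_psd by (simp add: psd_def C_def)
  show ?thesis
  proof (cases "C = 0")
    case True
    have "B = 0"
    proof (rule ccontr)
      assume "B \<noteq> 0"
      have "0 \<le> A + 2 * (- (A + 1) / (2 * B)) * B"
        using nonneg[of "- (A + 1) / (2 * B)"] True by simp
      also have "\<dots> = -1" using \<open>B \<noteq> 0\<close> by (simp add: field_simps)
      finally show False by simp
    qed
    then show ?thesis using True by (simp add: B_def C_def)
  next
    case False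
    with \<open>0 \<le> C\<close> have "0 < C" by simp
    have "0 \<le> A + 2 * (- B / C) * B + (- B / C)\<^sup>2 * C" by (rule nonneg)
    also have "\<dots> = A - B\<^sup>2 / C" using \<open>0 < C\<close> by (simp add: field_simps power2_eq_square)
    finally have "B\<^sup>2 \<le> A * C" using \<open>0 < C\<close> by (simp add: divide_le_eq)
    then show ?thesis by (simp add: A_def B_def C_def)
  qed
qed

lemma convex_on_sublevel_set:
  assumes "convex_on S f"
  shows "convex {x \<in> S. f x \<le> r}"
  unfolding convex_def
proof (intro ballI allI impI)
  fix x y and u v :: real
  assume "x \<in> {x \<in> S. f x \<le> r}" "y \<in> {x \<in> S. f x \<le> r}" "0 \<le> u" "0 \<le> v" "u + v = 1"
  moreover from this have "u *\<^sub>R x + v *\<^sub>R y \<in> S"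
    using assms by (simp add: convex_on_def convex_def)
  ultimately show "u *\<^sub>R x + v *\<^sub>R y \<in> {x \<in> S. f x \<le> r}"
    using convex_lower[OF assms, of x y u v] by auto
qed

lemma convex_on_quadratic:
  fixes H :: "real^'n^'n"
  assumes "psd H"
  shows "convex_on UNIV (\<lambda>x. x \<bullet> (H *v x) + c \<bullet> x + k)"
proof (rule convex_onI)
  fix t :: real and x y :: "real^'n"
  assume "0 < t" "t < 1"
  let ?z = "(1 - t) *\<^sub>R x + t *\<^sub>R y"
  define q where "q a b = a \<bullet> (H *v b)" for a b
  have z: "q ?z ?z = (1 - t)\<^sup>2 * q x x + (1 - t) * t * (q x y + q y x) + t\<^sup>2 * q y y"
    and diff: "q (x - y) (x - y) = q x x - q x y - q y x + q y y"
    by (simp_all add: q_def matrix_vector_right_distrib matrix_vector_mult_diff_distrib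
        matrix_vector_mult_scaleR inner_add_left inner_diff_left algebra_simps power2_eq_square)
  have "(1 - t) * q x x + t * q y y - q ?z ?z = t * (1 - t) * q (x - y) (x - y)"
    unfolding z diff by (simp add: algebra_simps power2_eq_square)
  moreover have "0 \<le> t * (1 - t) * q (x - y) (x - y)"
    using \<open>0 < t\<close> \<open>t < 1\<close> assms by (simp add: psd_def q_def)
  moreover have "c \<bullet> ?z = (1 - t) * (c \<bullet> x) + t * (c \<bullet> y)"
    by (simp add: inner_add_right)
  ultimately show "?z \<bullet> (H *v ?z) + c \<bullet> ?z + k
      \<le> (1 - t) * (x \<bullet> (H *v x) + c \<bullet> x + k) + t * (y \<bullet> (H *v y) + c \<bullet> y + k)"
    by (simp add: q_def algebra_simps)
qed simp

lemma convex_Dset: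
  fixes H :: "real^'n^'n"
  assumes "psd H"
  shows "convex (Dset H c)"
  using convex_on_sublevel_set[OF convex_on_quadratic[OF assms], of c "(1/4) * (c \<bullet> (pinv H *v c))" "1/2"]
  by (simp add: Dset_def)

lemma Dset_completed_square:
  fixes H :: "real^'n^'n"
  assumes H_sym: "transpose H = H" and c: "c = H *v z"
  shows "u \<in> Dset H c \<longleftrightarrow> (2 *\<^sub>R u + z) \<bullet> (H *v (2 *\<^sub>R u + z)) \<le> 2"
proof -
  define d where "d = u \<bullet> (H *v u) + c \<bullet> u + (1/4) * (c \<bullet> (pinv H *v c))"
  have "c \<bullet> u = u \<bullet> (H *v z)"
    unfolding c using symmetric_matrix_inner[OF H_sym, of u z] by (simp add: inner_commute)
  then have "(2 *\<^sub>R u + z) \<bullet> (H *v (2 *\<^sub>R u + z)) = 4 * d"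
    unfolding d_def quadratic_form_add[OF H_sym] inner_pinv_range[OF H_sym c]
    by (simp add: matrix_vector_mult_scaleR)
  moreover have "u \<in> Dset H c \<longleftrightarrow> d \<le> 1/2"
    by (simp add: Dset_def d_def)
  ultimately show ?thesis
    by (simp only:) linarith
qed

lemma concave_on_exp_neg_quadratic:
  fixes a b e :: real
  assumes "convex I" and slope: "\<And>s. s \<in> I \<Longrightarrow> (2 * a * s + b)\<^sup>2 \<le> 2 * a"
  shows "concave_on I (\<lambda>s. exp (- (a * s\<^sup>2 + b * s + e)))"
proof -
  define g where "g s = exp (- (a * s\<^sup>2 + b * s + e))" for s
  have g': "(g has_real_derivative - (2 * a * s + b) * g s) (at s)" for s
    unfolding g_def by (auto intro!: derivative_eq_intros simp: algebra_simps)
  have g'': "((\<lambda>s. - (2 * a * s + b) * g s) has_real_derivative ((2 * a * s + b)\<^sup>2 - 2 * a) * g s) (at s)" for s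
    by (auto intro!: derivative_eq_intros g' simp: algebra_simps power2_eq_square)
  have g''_nonpos: "((2 * a * s + b)\<^sup>2 - 2 * a) * g s \<le> 0" if "s \<in> I" for s
    using slope[OF that] by (simp add: g_def mult_nonpos_nonneg)
  show ?thesis
    unfolding g_def[abs_def, symmetric]
    using f''_le0_imp_concave[OF \<open>convex I\<close> g' g'' g''_nonpos] .
qed

lemma Bfun_concave_on:
  fixes H :: "real^'n^'n"
  assumes H_sym: "transpose H = H" and H_psd: "psd H" and c: "c = H *v z" and "convex S"
    and S_bound: "\<And>u. u \<in> S \<Longrightarrow> (2 *\<^sub>R u + z) \<bullet> (H *v (2 *\<^sub>R u + z)) \<le> 2"
  shows "concave_on S (Bfun H c h)"
  unfolding concave_on_def
proof (rule convex_onI)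
  fix t :: real and x y
  assume t: "0 < t" "t < 1" and xy: "x \<in> S" "y \<in> S"
  define d where "d = y - x"
  define a where "a = d \<bullet> (H *v d)"
  define b where "b = 2 * (x \<bullet> (H *v d)) + c \<bullet> d"
  define e where "e = x \<bullet> (H *v x) + c \<bullet> x + h"
  have line: "Bfun H c h (x + s *\<^sub>R d) = exp (- (a * s\<^sup>2 + b * s + e))" for s
    unfolding Bfun_def quadratic_form_add[OF H_sym] a_def b_def e_def
    by (simp add: matrix_vector_mult_scaleR inner_add_right algebra_simps power2_eq_square)
  have "(2 * a * s + b)\<^sup>2 \<le> 2 * a" if "s \<in> {0..1}" for s
  proof -
    define u where "u = x + s *\<^sub>R d"
    have "u = (1 - s) *\<^sub>R x + s *\<^sub>R y"
      by (simp add: u_def d_def algebra_simps)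
    then have "u \<in> S"
      using \<open>convex S\<close> xy that by (simp add: convex_alt)
    have "c \<bullet> d = z \<bullet> (H *v d)"
      unfolding c by (rule symmetric_matrix_inner[OF H_sym, symmetric])
    then have "2 * a * s + b = (2 *\<^sub>R u + z) \<bullet> (H *v d)"
      by (simp add: u_def a_def b_def inner_add_left algebra_simps)
    then have "(2 * a * s + b)\<^sup>2 \<le> ((2 *\<^sub>R u + z) \<bullet> (H *v (2 *\<^sub>R u + z))) * a"
      using psd_cauchy_schwarz[OF H_sym H_psd, of "2 *\<^sub>R u + z" d] by (simp add: a_def)
    also have "\<dots> \<le> 2 * a"
      using S_bound[OF \<open>u \<in> S\<close>] H_psd by (simp add: a_def psd_def mult_right_mono)
    finally show ?thesis .
  qed
  then have "concave_on {0..1} (\<lambda>s. exp (- (a * s\<^sup>2 + b * s + e)))"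
    by (intro concave_on_exp_neg_quadratic) auto
  from concave_onD[OF this, of t 0 1] t
  have "(1 - t) * Bfun H c h x + t * Bfun H c h y \<le> Bfun H c h ((1 - t) *\<^sub>R x + t *\<^sub>R y)"
    using line[of 0] line[of 1] line[of t] by (simp add: d_def algebra_simps)
  then show "- Bfun H c h ((1 - t) *\<^sub>R x + t *\<^sub>R y) \<le> (1 - t) * - Bfun H c h x + t * - Bfun H c h y"
    by simp
qed (rule \<open>convex S\<close>)

lemma concave_on_weighted_sum:
  fixes f :: "'p \<Rightarrow> 'a::real_vector \<Rightarrow> real"
  assumes "finite P" and "convex S"
    and "\<And>p. p \<in> P \<Longrightarrow> 0 \<le> w p" and "\<And>p. p \<in> P \<Longrightarrow> concave_on S (f p)"
  shows "concave_on S (\<lambda>x. \<Sum>p\<in>P. w p * f p x)"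
  using assms(1,3,4)
proof (induction P rule: finite_induct)
  case empty
  show ?case using \<open>convex S\<close> by (simp add: concave_on_const)
next
  case (insert p P)
  then show ?case
    by (simp add: concave_on_add concave_on_cmul)
qed

lemma Bfun_concave_on_Dset:
  fixes H :: "real^'n^'n"
  assumes "transpose H = H" and "psd H" and "c \<in> range (\<lambda>z. H *v z)"
  shows "concave_on (Dset H c) (Bfun H c h)"
proof -
  obtain z where c: "c = H *v z" using assms(3) by blast
  show ?thesis
    using Bfun_concave_on[OF assms(1,2) c convex_Dset[OF assms(2)]]
      Dset_completed_square[OF assms(1) c] by blast
qed

theorem mainTheorem2:
  fixes P :: "('k \<times> 'k) set"
    and H :: "'k \<times> 'k \<Rightarrow> real^'n^'n"
    and c :: "'k \<times> 'k \<Rightarrow> real^'n"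
    and h :: "'k \<times> 'k \<Rightarrow> real"
    and w :: "'k \<times> 'k \<Rightarrow> real"
    and U :: "(real^'n) set"
  assumes "finite P"
    and "\<And>p. p \<in> P \<Longrightarrow> transpose (H p) = H p"
    and "\<And>p. p \<in> P \<Longrightarrow> psd (H p)"
    and "\<And>p. p \<in> P \<Longrightarrow> c p \<in> range (\<lambda>z. H p *v z)"
    and "\<And>p. p \<in> P \<Longrightarrow> 0 \<le> w p"
    and "polytope U"
    and "\<And>v p. v extreme_point_of U \<Longrightarrow> p \<in> P \<Longrightarrow> v \<in> Dset (H p) (c p)"
  shows "concave_on U (Ffun P w H c h)"
proof -
  have "convex U" and "compact U"
    using \<open>polytope U\<close> by (simp_all add: polytope_imp_convex polytope_imp_compact)
  have "U \<subseteq> Dset (H p) (c p)" if "p \<in> P" for p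
  proof -
    have "U = convex hull {v. v extreme_point_of U}"
      using Krein_Milman_Minkowski[OF \<open>compact U\<close> \<open>convex U\<close>] .
    also have "\<dots> \<subseteq> Dset (H p) (c p)"
      using assms(7) that by (intro hull_minimal convex_Dset[OF assms(3)[OF that]]) blast
    finally show ?thesis .
  qed
  then have "concave_on U (Bfun (H p) (c p) (h p))" if "p \<in> P" for p
    using Bfun_concave_on_Dset[OF assms(2-4)[OF that]] \<open>convex U\<close> that
    unfolding concave_on_def by (metis convex_on_subset)
  then show ?thesis
    unfolding Ffun_def[abs_def]
    by (intro concave_on_weighted_sum[OF \<open>finite P\<close> \<open>convex U\<close>] assms(5))
qed

end
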